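(* For every $G^*\in\mathcal{G}^*_{d,c}(n)$, if $\sigma$ is a uniformly random permutation in $S_n$ then \[ \mathbb{E}\left[\lvert\phi(G^{*}_\sigma)\rvert\right] \geq T_c,\qquad T_c=c\cdot\frac{dn}{2}\cdot\frac{d-1}{d+1}.\]
   Context: Fix $0<c<1$, $n,d$ with $dn$ even, and $T_{\max}=\binom d2\frac n3$. $\mathcal{G}^*_{d,c}(n)$ is the set of $d$-regular graphs on nodes $\{1,\dots,n\}$ with at least $c\cdot T_{\max}$ triangles, where at each node the $d$ incident edges carry distinct labels $1,\dots,d$. Configuration ordering: for edges $e=(i_1j_1)$, $f=(i_2j_2)$ with $i_1<j_1$, $i_2<j_2$, $e\prec f$ if $i_1<i_2$, or $i_1=i_2$ and the label of $e$ at $i_1$ is smaller than that of $f$. With $e_1\prec\dots\prec e_{nd/2}$ the edges and $G^*[k]$ the subgraph on $e_1,\dots,e_k$, $\phi(G^* )\in\{0,1\}^{nd/2}$ has $\phi(G^* )(k)=1$ iff $e_k$ lies in a triangle of $G^*[k]$; $\lvert x\rvert=\sum_j x(j)$. $G^*_\sigma$ denotes $G^*$ with node labels permuted by $\sigma\in S_n$ (edge labels kept). *)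

theory Defs
  imports "HOL-Probability.Probability" "HOL-Combinatorics.Permutations"
begin

text \<open>An edge-labelled graph: a set of edges (2-element node sets) together with
  a labelling function; lab i e is the label of edge e at its endpoint i.\<close>
type_synonym lgraph = "nat set set \<times> (nat \<Rightarrow> nat set \<Rightarrow> nat)"

definition edges :: "lgraph \<Rightarrow> nat set set" where "edges G = fst G"
definition elab :: "lgraph \<Rightarrow> nat \<Rightarrow> nat set \<Rightarrow> nat" where "elab G = snd G"

definition T_max :: "nat \<Rightarrow> nat \<Rightarrow> real" where
  "T_max n d = real (d choose 2) * real n / 3"

definition triangles :: "nat \<Rightarrow> lgraph \<Rightarrow> nat set set" where
  "triangles n G = {T. T \<subseteq> {1..n} \<and> card T = 3 \<and>
      (\<forall>u\<in>T. \<forall>v\<in>T. u \<noteq> v \<longrightarrow> {u, v} \<in> edges G)}"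

definition Gstar :: "nat \<Rightarrow> real \<Rightarrow> nat \<Rightarrow> lgraph set" where
  "Gstar d c n = {G.
     edges G \<subseteq> {e. \<exists>u v. e = {u, v} \<and> u \<noteq> v \<and> u \<in> {1..n} \<and> v \<in> {1..n}} \<and>
     (\<forall>i\<in>{1..n}. card {e\<in>edges G. i \<in> e} = d) \<and>
     (\<forall>i\<in>{1..n}. bij_betw (elab G i) {e\<in>edges G. i \<in> e} {1..d}) \<and>
     real (card (triangles n G)) \<ge> c * T_max n d}"

definition cprec :: "lgraph \<Rightarrow> nat set \<Rightarrow> nat set \<Rightarrow> bool" where
  "cprec G e f \<longleftrightarrow> Min e < Min f \<or>
     (Min e = Min f \<and> elab G (Min e) e < elab G (Min f) f)"

definition edge_at :: "lgraph \<Rightarrow> nat \<Rightarrow> nat set" where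
  "edge_at G k = (THE e. e \<in> edges G \<and> card {f\<in>edges G. cprec G f e} = k - 1)"

definition sub_edges :: "lgraph \<Rightarrow> nat \<Rightarrow> nat set set" where
  "sub_edges G k = edge_at G ` {1..k}"

definition in_triangle :: "nat set set \<Rightarrow> nat set \<Rightarrow> bool" where
  "in_triangle S e \<longleftrightarrow> e \<in> S \<and> (\<exists>w. w \<notin> e \<and> (\<forall>v\<in>e. {v, w} \<in> S))"

definition phi :: "lgraph \<Rightarrow> nat \<Rightarrow> nat" where
  "phi G k = (if in_triangle (sub_edges G k) (edge_at G k) then 1 else 0)"

definition phi_norm :: "nat \<Rightarrow> nat \<Rightarrow> lgraph \<Rightarrow> nat" where
  "phi_norm n d G = (\<Sum>k\<in>{1..n * d div 2}. phi G k)"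

text \<open>G*_sigma: node labels permuted by sigma, edge labels kept.\<close>
definition relabel :: "(nat \<Rightarrow> nat) \<Rightarrow> lgraph \<Rightarrow> lgraph" where
  "relabel \<sigma> G = ((\<lambda>e. \<sigma> ` e) ` edges G,
                    \<lambda>j f. elab G (inv \<sigma> j) (inv \<sigma> ` f))"

end

theory Submission
  imports Defs
begin

text \<open>
  An edge \<open>{u, v}\<close>, \<open>u < v\<close>, closes a triangle in the configuration ordering exactly when
  its endpoints have a common neighbour \<open>w < u\<close>: the triangle edge \<open>{v, w}\<close> then precedes
  \<open>{u, v}\<close>, whereas for \<open>w > u\<close> it comes later. After relabelling by \<open>\<sigma>\<close>, the edge \<open>e\<close>
  is counted iff the \<open>\<sigma>\<close>-least element of \<open>N(e) \<union> e\<close> lies in the common neighbourhood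
  \<open>N(e)\<close>. For uniform \<open>\<sigma>\<close> that least element is uniform, so this happens with probability
  \<open>|N(e)| / (|N(e)| + 2) \<ge> |N(e)| / (d + 1)\<close>, as \<open>|N(e)| \<le> d - 1\<close>. Finally
  \<open>\<Sum>\<^sub>e |N(e)|\<close> is three times the number of triangles, which is at least \<open>c T_max\<close>.
\<close>

lemma sum_card_filter_swap:
  assumes "finite A" "finite B"
  shows "(\<Sum>a\<in>A. card {b\<in>B. P a b}) = (\<Sum>b\<in>B. card {a\<in>A. P a b})"
proof -
  have "(\<Sum>a\<in>A. card {b\<in>B. P a b}) = (\<Sum>a\<in>A. \<Sum>b\<in>B. if P a b then 1 else 0)"
    using assms by (simp add: sum.inter_filter[symmetric])
  also have "\<dots> = (\<Sum>b\<in>B. \<Sum>a\<in>A. if P a b then 1 else 0)"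
    by (rule sum.swap)
  also have "\<dots> = (\<Sum>b\<in>B. card {a\<in>A. P a b})"
    using assms by (simp add: sum.inter_filter[symmetric])
  finally show ?thesis .
qed

definition perms_argmin :: "'a set \<Rightarrow> 'a set \<Rightarrow> 'a \<Rightarrow> ('a::linorder \<Rightarrow> 'a) set" where
  "perms_argmin A S x = {\<sigma>. \<sigma> permutes A \<and> (\<forall>z\<in>S. z \<noteq> x \<longrightarrow> \<sigma> x < \<sigma> z)}"

lemma perms_argmin_transpose:
  assumes "S \<subseteq> A" "x \<in> S" "y \<in> S" "\<sigma> \<in> perms_argmin A S y"
  shows "\<sigma> \<circ> Transposition.transpose x y \<in> perms_argmin A S x"
proof -
  have "\<sigma> permutes A" and min_y: "\<And>z. z \<in> S \<Longrightarrow> z \<noteq> y \<Longrightarrow> \<sigma> y < \<sigma> z"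
    using assms(4) by (auto simp: perms_argmin_def)
  then have "\<sigma> \<circ> Transposition.transpose x y permutes A"
    using assms(1-3) by (intro permutes_compose permutes_swap_id) auto
  moreover have "\<sigma> (Transposition.transpose x y x) < \<sigma> (Transposition.transpose x y z)"
    if "z \<in> S" "z \<noteq> x" for z
    using that assms(2) min_y by (cases "z = y") auto
  ultimately show ?thesis by (simp add: perms_argmin_def)
qed

lemma card_perms_argmin_eq:
  assumes "S \<subseteq> A" "x \<in> S" "y \<in> S"
  shows "card (perms_argmin A S x) = card (perms_argmin A S y)"
proof -
  let ?f = "\<lambda>\<sigma>. \<sigma> \<circ> Transposition.transpose x y"
  have "?f ` perms_argmin A S y \<subseteq> perms_argmin A S x"
    using perms_argmin_transpose[OF assms] by blast
  moreover have "?f ` perms_argmin A S x \<subseteq> perms_argmin A S y"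
    using perms_argmin_transpose[OF assms(1,3,2)] by (auto simp: transpose_commute[of y x])
  moreover have "?f (?f \<sigma>) = \<sigma>" for \<sigma>
    by (simp add: fun_eq_iff)
  ultimately have "bij_betw ?f (perms_argmin A S y) (perms_argmin A S x)"
    by (intro bij_betw_byWitness[where f' = ?f]) auto
  then show ?thesis by (simp add: bij_betw_same_card)
qed

lemma perms_argmin_disjoint:
  assumes "x \<in> S" "y \<in> S" "x \<noteq> y"
  shows "perms_argmin A S x \<inter> perms_argmin A S y = {}"
proof (intro equals0I)
  fix \<sigma> assume "\<sigma> \<in> perms_argmin A S x \<inter> perms_argmin A S y"
  with assms have "\<sigma> x < \<sigma> y" "\<sigma> y < \<sigma> x" by (auto simp: perms_argmin_def)
  then show False by simp
qed

lemma permutations_eq_UN_perms_argmin: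
  assumes "finite S" "S \<noteq> {}"
  shows "{\<sigma>. \<sigma> permutes A} = (\<Union>x\<in>S. perms_argmin A S x)"
proof (intro equalityI subsetI)
  fix \<sigma> assume "\<sigma> \<in> {\<sigma>. \<sigma> permutes A}"
  then have "inj \<sigma>" by (simp add: permutes_inj)
  have "Min (\<sigma> ` S) \<in> \<sigma> ` S"
    using assms by (intro Min_in) auto
  then obtain x where "x \<in> S" "\<sigma> x = Min (\<sigma> ` S)"
    by (metis imageE)
  moreover have "\<forall>z\<in>S. z \<noteq> x \<longrightarrow> \<sigma> x < \<sigma> z"
    using \<open>\<sigma> x = _\<close> assms(1) \<open>inj \<sigma>\<close>
    by (metis Min_le finite_imageI image_eqI injD order.not_eq_order_implies_strict)
  ultimately show "\<sigma> \<in> (\<Union>x\<in>S. perms_argmin A S x)"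
    using \<open>\<sigma> \<in> _\<close> unfolding perms_argmin_def by blast
qed (auto simp: perms_argmin_def)

lemma card_perms_argmin:
  assumes "finite A" "S \<subseteq> A" "x \<in> S"
  shows "card (perms_argmin A S x) * card S = card {\<sigma>. \<sigma> permutes A}"
proof -
  have "finite S" using assms finite_subset by blast
  have "finite (perms_argmin A S y)" for y
    using finite_permutations[OF assms(1)] by (rule finite_subset[rotated]) (auto simp: perms_argmin_def)
  have "card {\<sigma>. \<sigma> permutes A} = card (\<Union>y\<in>S. perms_argmin A S y)"
    using permutations_eq_UN_perms_argmin[OF \<open>finite S\<close>, of A] assms(3) by (metis empty_iff)
  also have "\<dots> = (\<Sum>y\<in>S. card (perms_argmin A S y))"
    using \<open>finite (perms_argmin A S _)\<close>
    by (intro card_UN_disjoint \<open>finite S\<close> ballI impI perms_argmin_disjoint) auto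
  also have "\<dots> = card S * card (perms_argmin A S x)"
    using card_perms_argmin_eq[OF assms(2) _ assms(3)] by simp
  finally show ?thesis by simp
qed

lemma card_permutations_some_below:
  fixes A :: "'a::linorder set"
  assumes "finite A" "N \<union> e \<subseteq> A" "N \<inter> e = {}"
  shows "card N * card {\<sigma>. \<sigma> permutes A}
    \<le> card {\<sigma>. \<sigma> permutes A \<and> (\<exists>w\<in>N. \<forall>x\<in>e. \<sigma> w < \<sigma> x)} * (card N + card e)"
proof -
  let ?S = "N \<union> e" and ?B = "{\<sigma>. \<sigma> permutes A \<and> (\<exists>w\<in>N. \<forall>x\<in>e. \<sigma> w < \<sigma> x)}"
  have fin: "finite N" "finite e" "finite ?B"
    using assms finite_subset[OF _ finite_permutations[OF assms(1)]] finite_subset by auto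
  have sub: "(\<Union>w\<in>N. perms_argmin A ?S w) \<subseteq> ?B"
  proof
    fix \<sigma> assume "\<sigma> \<in> (\<Union>w\<in>N. perms_argmin A ?S w)"
    then obtain w where "w \<in> N" "\<sigma> permutes A" "\<forall>z\<in>?S. z \<noteq> w \<longrightarrow> \<sigma> w < \<sigma> z"
      by (auto simp: perms_argmin_def)
    moreover have "x \<noteq> w" if "x \<in> e" for x
      using that \<open>w \<in> N\<close> assms(3) by blast
    ultimately show "\<sigma> \<in> ?B" by blast
  qed
  have "card N * card {\<sigma>. \<sigma> permutes A} = (\<Sum>w\<in>N. card (perms_argmin A ?S w)) * card ?S"
    using card_perms_argmin[OF assms(1,2)] by (simp add: sum_distrib_right)
  also have "(\<Sum>w\<in>N. card (perms_argmin A ?S w)) = card (\<Union>w\<in>N. perms_argmin A ?S w)"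
    by (intro card_UN_disjoint[symmetric] ballI impI perms_argmin_disjoint)
      (use sub fin in \<open>auto intro: finite_subset\<close>)
  also have "\<dots> \<le> card ?B"
    using sub fin by (intro card_mono)
  also have "card ?S = card N + card e"
    using fin assms(3) by (simp add: card_Un_disjoint)
  finally show ?thesis by simp
qed

definition common_nbrs :: "nat set set \<Rightarrow> nat set \<Rightarrow> nat set" where
  "common_nbrs E e = {w. \<forall>x\<in>e. {x, w} \<in> E}"

definition apex_below :: "(nat \<Rightarrow> nat) \<Rightarrow> nat set set \<Rightarrow> nat set \<Rightarrow> bool" where
  "apex_below r E e \<longleftrightarrow> (\<exists>w\<in>common_nbrs E e. \<forall>x\<in>e. r w < r x)"

lemma cprec_irrefl: "\<not> cprec H e e"
  by (simp add: cprec_def)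

lemma cprec_trans: "cprec H e f \<Longrightarrow> cprec H f g \<Longrightarrow> cprec H e g"
  by (auto simp: cprec_def)

definition cprec_rank :: "lgraph \<Rightarrow> nat set \<Rightarrow> nat" where
  "cprec_rank H e = card {f\<in>edges H. cprec H f e}"

locale labelled_graph =
  fixes H :: lgraph
  assumes finite_edges: "finite (edges H)"
    and card_edge: "e \<in> edges H \<Longrightarrow> card e = 2"
    and inj_on_elab: "inj_on (elab H i) {e\<in>edges H. i \<in> e}"
begin

lemma Min_edge_in: "e \<in> edges H \<Longrightarrow> Min e \<in> e"
  by (metis Min_in card_edge card.empty card.infinite zero_neq_numeral)

lemma cprec_total:
  assumes "e \<in> edges H" "f \<in> edges H" "e \<noteq> f"
  shows "cprec H e f \<or> cprec H f e"
proof (cases "Min e = Min f")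
  case True
  then have "elab H (Min e) e \<noteq> elab H (Min e) f"
    using inj_on_elab[of "Min e"] assms Min_edge_in[of e] Min_edge_in[of f] by (auto dest: inj_onD)
  with True show ?thesis by (auto simp: cprec_def)
qed (auto simp: cprec_def)

lemma cprec_rank_less:
  assumes "e \<in> edges H" "cprec H e f"
  shows "cprec_rank H e < cprec_rank H f"
  unfolding cprec_rank_def
proof (rule psubset_card_mono)
  show "finite {g\<in>edges H. cprec H g f}"
    using finite_edges by simp
  show "{g\<in>edges H. cprec H g e} \<subset> {g\<in>edges H. cprec H g f}"
    using assms cprec_trans cprec_irrefl by blast
qed

lemma cprec_rank_less_card:
  assumes "e \<in> edges H"
  shows "cprec_rank H e < card (edges H)"
  unfolding cprec_rank_def
proof (rule psubset_card_mono[OF finite_edges])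
  show "{g\<in>edges H. cprec H g e} \<subset> edges H"
    using assms cprec_irrefl by blast
qed

lemma cprec_rank_le_iff:
  assumes "e \<in> edges H" "f \<in> edges H"
  shows "cprec_rank H f \<le> cprec_rank H e \<longleftrightarrow> f = e \<or> cprec H f e"
proof
  assume "cprec_rank H f \<le> cprec_rank H e"
  then have "\<not> cprec H e f"
    using cprec_rank_less[OF assms(1), of f] by auto
  then show "f = e \<or> cprec H f e"
    using cprec_total[OF assms] by blast
next
  assume "f = e \<or> cprec H f e"
  then show "cprec_rank H f \<le> cprec_rank H e"
    using cprec_rank_less[OF assms(2)] by fastforce
qed

lemma inj_on_cprec_rank: "inj_on (cprec_rank H) (edges H)"
proof (rule inj_onI)
  fix e f assume e: "e \<in> edges H" and f: "f \<in> edges H" and eq: "cprec_rank H e = cprec_rank H f"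
  then have "e = f \<or> cprec H e f" "f = e \<or> cprec H f e"
    using cprec_rank_le_iff[OF f e] cprec_rank_le_iff[OF e f] by simp_all
  then show "e = f"
    using cprec_trans[of H e f e] cprec_irrefl[of H e] by blast
qed

lemma bij_betw_Suc_cprec_rank:
  "bij_betw (\<lambda>e. Suc (cprec_rank H e)) (edges H) {1..card (edges H)}"
proof -
  have "cprec_rank H ` edges H \<subseteq> {..<card (edges H)}"
    using cprec_rank_less_card by auto
  moreover have "card (cprec_rank H ` edges H) = card {..<card (edges H)}"
    using card_image[OF inj_on_cprec_rank] by simp
  ultimately have "cprec_rank H ` edges H = {..<card (edges H)}"
    by (intro card_subset_eq) auto
  then have "(\<lambda>e. Suc (cprec_rank H e)) ` edges H = {1..card (edges H)}"
    by (metis image_Suc_lessThan image_image)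
  then show ?thesis
    using inj_on_cprec_rank by (simp add: bij_betw_def inj_on_def)
qed

lemma edge_at_Suc_cprec_rank: "e \<in> edges H \<Longrightarrow> edge_at H (Suc (cprec_rank H e)) = e"
  unfolding edge_at_def cprec_rank_def[symmetric]
  by (rule the_equality) (auto dest: inj_onD[OF inj_on_cprec_rank])

lemma sub_edges_Suc_cprec_rank:
  assumes "e \<in> edges H"
  shows "sub_edges H (Suc (cprec_rank H e)) = {f\<in>edges H. f = e \<or> cprec H f e}"
proof -
  let ?F = "{f\<in>edges H. cprec_rank H f \<le> cprec_rank H e}"
  have "{1..Suc (cprec_rank H e)} \<subseteq> (\<lambda>f. Suc (cprec_rank H f)) ` edges H"
    using bij_betw_Suc_cprec_rank cprec_rank_less_card[OF assms] by (auto simp: bij_betw_def)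
  then have "{1..Suc (cprec_rank H e)} = (\<lambda>f. Suc (cprec_rank H f)) ` ?F"
    by fastforce
  then have "sub_edges H (Suc (cprec_rank H e)) = edge_at H ` (\<lambda>f. Suc (cprec_rank H f)) ` ?F"
    by (simp add: sub_edges_def)
  also have "\<dots> = (\<lambda>f. f) ` ?F"
    unfolding image_image by (rule image_cong) (simp_all add: edge_at_Suc_cprec_rank)
  finally show ?thesis
    using cprec_rank_le_iff[OF assms] by auto
qed

lemma in_triangle_prefix_iff:
  assumes "e \<in> edges H"
  shows "in_triangle {f\<in>edges H. f = e \<or> cprec H f e} e \<longleftrightarrow> apex_below id (edges H) e"
proof -
  obtain u v where e: "e = {u, v}" "u < v"
    using card_edge[OF assms] by (metis card_2_iff insert_commute linorder_neqE_nat)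
  then have Min_e: "Min e = u" by auto
  show ?thesis
  proof
    assume "in_triangle {f\<in>edges H. f = e \<or> cprec H f e} e"
    then obtain w where "w \<notin> e" and w: "\<forall>x\<in>e. {x, w} \<in> edges H \<and> ({x, w} = e \<or> cprec H {x, w} e)"
      unfolding in_triangle_def by auto
    then have "cprec H {v, w} e"
      using e by (auto simp: doubleton_eq_iff)
    then have "w < u"
      using \<open>w \<notin> e\<close> e Min_e by (auto simp: cprec_def min_def split: if_splits)
    then show "apex_below id (edges H) e"
      using w e by (auto simp: apex_below_def common_nbrs_def)
  next
    assume "apex_below id (edges H) e"
    then obtain w where w: "\<forall>x\<in>e. {x, w} \<in> edges H" "w < u" "w < v"
      using e by (auto simp: apex_below_def common_nbrs_def)
    then have "cprec H {x, w} e" if "x \<in> e" for x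
      using that e Min_e by (auto simp: cprec_def min_def)
    moreover have "w \<notin> e"
      using w e by auto
    ultimately show "in_triangle {f\<in>edges H. f = e \<or> cprec H f e} e"
      using assms w(1) unfolding in_triangle_def by blast
  qed
qed

lemma sum_phi_eq_card_apex_below:
  "(\<Sum>k\<in>{1..card (edges H)}. phi H k) = card {e\<in>edges H. apex_below id (edges H) e}"
proof -
  have "(\<Sum>k\<in>{1..card (edges H)}. phi H k) = (\<Sum>e\<in>edges H. phi H (Suc (cprec_rank H e)))"
    using sum.reindex_bij_betw[OF bij_betw_Suc_cprec_rank, of "phi H"] by simp
  also have "\<dots> = (\<Sum>e\<in>edges H. if apex_below id (edges H) e then 1 else 0)"
    by (intro sum.cong refl)
      (simp add: phi_def sub_edges_Suc_cprec_rank edge_at_Suc_cprec_rank in_triangle_prefix_iff)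
  also have "\<dots> = card {e\<in>edges H. apex_below id (edges H) e}"
    using sum.inter_filter[OF finite_edges, of "\<lambda>_. 1::nat"] by simp
  finally show ?thesis .
qed

end

lemma edges_relabel: "edges (relabel \<sigma> H) = (`) \<sigma> ` edges H"
  by (simp add: relabel_def edges_def)

lemma elab_relabel: "elab (relabel \<sigma> H) i f = elab H (inv \<sigma> i) (inv \<sigma> ` f)"
  by (simp add: relabel_def elab_def)

lemma labelled_graph_relabel:
  assumes "inj \<sigma>" "labelled_graph H"
  shows "labelled_graph (relabel \<sigma> H)"
proof -
  interpret labelled_graph H by fact
  show ?thesis
  proof
    show "finite (edges (relabel \<sigma> H))"
      using finite_edges by (simp add: edges_relabel)
  next
    fix e assume "e \<in> edges (relabel \<sigma> H)"
    then show "card e = 2"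
      using card_edge assms(1) by (auto simp: edges_relabel card_image inj_on_subset)
  next
    fix i
    show "inj_on (elab (relabel \<sigma> H) i) {e\<in>edges (relabel \<sigma> H). i \<in> e}"
    proof (rule inj_onI)
      fix f g
      assume f: "f \<in> {e\<in>edges (relabel \<sigma> H). i \<in> e}" and g: "g \<in> {e\<in>edges (relabel \<sigma> H). i \<in> e}"
        and eq: "elab (relabel \<sigma> H) i f = elab (relabel \<sigma> H) i g"
      obtain f' g' where f': "f' \<in> edges H" "f = \<sigma> ` f'" and g': "g' \<in> edges H" "g = \<sigma> ` g'"
        using f g by (auto simp: edges_relabel)
      have "inv \<sigma> i \<in> f'"
        using f f' by (auto simp: inv_f_f[OF assms(1)])
      moreover have "inv \<sigma> i \<in> g'"
        using g g' by (auto simp: inv_f_f[OF assms(1)])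
      moreover have "elab H (inv \<sigma> i) f' = elab H (inv \<sigma> i) g'"
        using eq by (simp add: elab_relabel f' g' image_inv_f_f[OF assms(1)])
      ultimately show "f = g"
        using inj_on_elab[of "inv \<sigma> i"] f' g' by (auto dest: inj_onD)
    qed
  qed
qed

lemma apex_below_image:
  assumes "inj \<sigma>"
  shows "apex_below id ((`) \<sigma> ` E) (\<sigma> ` e) \<longleftrightarrow> apex_below \<sigma> E e"
proof -
  have edge_iff: "{\<sigma> x, \<sigma> y} \<in> (`) \<sigma> ` E \<longleftrightarrow> {x, y} \<in> E" for x y
    using inj_image_mem_iff[OF inj_on_image[of \<sigma> UNIV], of "{x, y}" E] assms by simp
  show ?thesis
  proof
    assume "apex_below id ((`) \<sigma> ` E) (\<sigma> ` e)"
    then obtain w where w: "\<forall>x\<in>e. {\<sigma> x, w} \<in> (`) \<sigma> ` E \<and> w < \<sigma> x"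
      by (auto simp: apex_below_def common_nbrs_def)
    show "apex_below \<sigma> E e"
    proof (cases "e = {}")
      case False
      then obtain w' where "w = \<sigma> w'"
        using w by blast
      then show ?thesis
        using w edge_iff by (auto simp: apex_below_def common_nbrs_def)
    qed (simp add: apex_below_def common_nbrs_def)
  next
    assume "apex_below \<sigma> E e"
    then obtain w where "\<forall>x\<in>e. {x, w} \<in> E \<and> \<sigma> w < \<sigma> x"
      by (auto simp: apex_below_def common_nbrs_def)
    then have "\<sigma> w \<in> common_nbrs ((`) \<sigma> ` E) (\<sigma> ` e)" "\<forall>x\<in>\<sigma> ` e. \<sigma> w < x"
      using edge_iff by (auto simp: common_nbrs_def)
    then show "apex_below id ((`) \<sigma> ` E) (\<sigma> ` e)"
      unfolding apex_below_def by auto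
  qed
qed

lemma (in labelled_graph) sum_phi_relabel:
  assumes "inj \<sigma>"
  shows "(\<Sum>k\<in>{1..card (edges H)}. phi (relabel \<sigma> H) k) = card {e\<in>edges H. apex_below \<sigma> (edges H) e}"
proof -
  interpret R: labelled_graph "relabel \<sigma> H"
    using labelled_graph_relabel assms labelled_graph_axioms .
  have inj_image: "inj_on ((`) \<sigma>) X" for X
    using assms by (simp add: inj_on_image inj_on_subset)
  have "{f\<in>edges (relabel \<sigma> H). apex_below id (edges (relabel \<sigma> H)) f}
      = (`) \<sigma> ` {e\<in>edges H. apex_below \<sigma> (edges H) e}"
    by (auto simp: edges_relabel apex_below_image[OF assms])
  then show ?thesis
    using R.sum_phi_eq_card_apex_below by (simp add: edges_relabel card_image inj_image)
qed

locale graph_on =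
  fixes n :: nat and G :: lgraph
  assumes edges_subset: "edges G \<subseteq> {e. e \<subseteq> {1..n} \<and> card e = 2}"
begin

lemma finite_edges: "finite (edges G)"
  by (rule finite_subset[of _ "Pow {1..n}"]) (use edges_subset in auto)

lemma card_edge: "e \<in> edges G \<Longrightarrow> card e = 2"
  using edges_subset by auto

lemma common_nbr_notin:
  assumes "w \<in> common_nbrs (edges G) e"
  shows "w \<notin> e"
proof
  assume "w \<in> e"
  then have "{w} \<in> edges G"
    using assms by (auto simp: common_nbrs_def dest: bspec[of _ _ w])
  then show False
    using card_edge by fastforce
qed

lemma common_nbrs_subset:
  assumes "x \<in> e"
  shows "common_nbrs (edges G) e \<subseteq> {1..n}"
proof
  fix w assume "w \<in> common_nbrs (edges G) e"
  then have "{x, w} \<in> edges G"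
    using assms by (simp add: common_nbrs_def)
  then show "w \<in> {1..n}"
    using edges_subset by blast
qed

lemma finite_common_nbrs:
  assumes "e \<in> edges G"
  shows "finite (common_nbrs (edges G) e)"
proof -
  obtain x where "x \<in> e"
    using card_edge[OF assms] by (auto simp: card_2_iff)
  then show ?thesis
    by (rule finite_subset[OF common_nbrs_subset]) simp
qed

lemma insert_common_nbr_in_triangles:
  assumes "e \<in> edges G" "w \<in> common_nbrs (edges G) e"
  shows "insert w e \<in> triangles n G"
proof -
  obtain u v where e: "e = {u, v}" "u \<noteq> v"
    using card_edge[OF assms(1)] by (auto simp: card_2_iff)
  have "w \<notin> e"
    using assms(2) by (rule common_nbr_notin)
  have "{u, v} \<in> edges G" "{u, w} \<in> edges G" "{v, w} \<in> edges G"
    using assms e by (auto simp: common_nbrs_def)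
  then have "{a, b} \<in> edges G" if "a \<in> {u, v, w}" "b \<in> {u, v, w}" "a \<noteq> b" for a b
    using that by (auto simp: insert_commute)
  then have "{x, y} \<in> edges G" if "x \<in> insert w e" "y \<in> insert w e" "x \<noteq> y" for x y
    using that e by auto
  moreover have "insert w e \<subseteq> {1..n}"
    using assms edges_subset common_nbrs_subset[of u e] e by blast
  moreover have "card (insert w e) = 3"
    using \<open>w \<notin> e\<close> e by auto
  ultimately show ?thesis
    by (simp add: triangles_def)
qed

lemma triangle_remove_edge:
  assumes "T \<in> triangles n G" "e \<subseteq> T" "card e = 2"
  obtains w where "T - e = {w}" "e \<in> edges G" "w \<in> common_nbrs (edges G) e"
proof -
  have T: "card T = 3" "\<forall>u\<in>T. \<forall>v\<in>T. u \<noteq> v \<longrightarrow> {u, v} \<in> edges G"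
    using assms(1) by (auto simp: triangles_def)
  have "finite e"
    using assms(3) by (metis card.infinite zero_neq_numeral)
  then have "card (T - e) = 1"
    using T(1) assms(2,3) by (simp add: card_Diff_subset)
  then obtain w where w: "T - e = {w}"
    by (rule card_1_singletonE)
  moreover have "e \<in> edges G"
    using assms(2,3) T(2) by (auto simp: card_2_iff)
  moreover have "w \<in> common_nbrs (edges G) e"
  proof -
    have "w \<in> T" "w \<notin> e"
      using w by auto
    then show ?thesis
      using T(2) assms(2) by (auto simp: common_nbrs_def)
  qed
  ultimately show ?thesis
    using that by blast
qed

text \<open>Each triangle arises from exactly three pairs (edge, common neighbour).\<close>
lemma sum_card_common_nbrs: "(\<Sum>e\<in>edges G. card (common_nbrs (edges G) e)) = 3 * card (triangles n G)"
proof -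
  let ?N = "common_nbrs (edges G)" and ?Tr = "triangles n G"
  let ?pairs = "\<lambda>T. {e. e \<subseteq> T \<and> card e = 2}"
  have finite_Tr: "finite ?Tr"
    by (rule finite_subset[of _ "Pow {1..n}"]) (auto simp: triangles_def)
  have card_T: "card T = 3" if "T \<in> ?Tr" for T
    using that by (simp add: triangles_def)
  have "bij_betw (\<lambda>(e, w). (insert w e, e)) (SIGMA e:edges G. ?N e) (SIGMA T:?Tr. ?pairs T)"
  proof (rule bij_betw_byWitness[where f' = "\<lambda>(T, e). (e, the_elem (T - e))"])
    show "\<forall>p\<in>SIGMA e:edges G. ?N e. (\<lambda>(T, e). (e, the_elem (T - e))) ((\<lambda>(e, w). (insert w e, e)) p) = p"
      by (auto simp: insert_Diff_if dest: common_nbr_notin)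
    show "(\<lambda>(e, w). (insert w e, e)) ` (SIGMA e:edges G. ?N e) \<subseteq> (SIGMA T:?Tr. ?pairs T)"
      using insert_common_nbr_in_triangles card_edge by auto
    have decomposition: "insert (the_elem (T - e)) e = T \<and> e \<in> edges G \<and> the_elem (T - e) \<in> ?N e"
      if T: "T \<in> ?Tr" and e: "e \<in> ?pairs T" for T e
    proof -
      obtain w where w: "T - e = {w}" "e \<in> edges G" "w \<in> ?N e"
        by (rule triangle_remove_edge[of T e]) (use T e in auto)
      moreover have "insert w e = T"
        using w(1) e by blast
      ultimately show ?thesis by simp
    qed
    then show "\<forall>p\<in>SIGMA T:?Tr. ?pairs T. (\<lambda>(e, w). (insert w e, e)) ((\<lambda>(T, e). (e, the_elem (T - e))) p) = p"
      by auto
    show "(\<lambda>(T, e). (e, the_elem (T - e))) ` (SIGMA T:?Tr. ?pairs T) \<subseteq> (SIGMA e:edges G. ?N e)"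
      using decomposition by auto
  qed
  then have "card (SIGMA e:edges G. ?N e) = card (SIGMA T:?Tr. ?pairs T)"
    by (rule bij_betw_same_card)
  moreover have card_pairs: "card (?pairs T) = 3" if "T \<in> ?Tr" for T
  proof -
    have "finite T"
      using card_T[OF that] by (intro card_ge_0_finite) simp
    then show ?thesis
      using n_subsets[of T 2] card_T[OF that] by (simp add: choose_two)
  qed
  moreover have "finite (?pairs T)" if "T \<in> ?Tr" for T
    using card_pairs[OF that] by (intro card_ge_0_finite) simp
  ultimately show ?thesis
    using finite_edges finite_common_nbrs finite_Tr by (simp add: card_SigmaI)
qed

end

locale regular_graph = graph_on +
  fixes d :: nat
  assumes degree: "i \<in> {1..n} \<Longrightarrow> card {e\<in>edges G. i \<in> e} = d"
begin

lemma card_edges: "2 * card (edges G) = n * d"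
proof -
  have "n * d = (\<Sum>i\<in>{1..n}. card {e\<in>edges G. i \<in> e})"
    by (simp add: degree)
  also have "\<dots> = (\<Sum>e\<in>edges G. card {i\<in>{1..n}. i \<in> e})"
    using finite_edges by (intro sum_card_filter_swap) simp_all
  also have "\<dots> = (\<Sum>e\<in>edges G. 2)"
  proof (rule sum.cong[OF refl])
    fix e assume "e \<in> edges G"
    then have "{i\<in>{1..n}. i \<in> e} = e"
      using edges_subset by blast
    then show "card {i\<in>{1..n}. i \<in> e} = 2"
      using card_edge[OF \<open>e \<in> edges G\<close>] by simp
  qed
  finally show ?thesis by simp
qed

lemma card_common_nbrs_less:
  assumes "e \<in> edges G"
  shows "card (common_nbrs (edges G) e) + 1 \<le> d"
proof -
  let ?N = "common_nbrs (edges G) e"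
  obtain u v where e: "e = {u, v}" "u \<noteq> v"
    using card_edge[OF assms] by (auto simp: card_2_iff)
  have "e \<subseteq> {1..n}"
    using assms edges_subset by blast
  then have "u \<in> {1..n}"
    using e by simp
  have "u \<notin> ?N" "v \<notin> ?N"
    using common_nbr_notin e by blast+
  then have "inj_on (\<lambda>w. {u, w}) (insert v ?N)"
    using e(2) by (intro inj_onI) (metis doubleton_eq_iff insertE)
  moreover have "(\<lambda>w. {u, w}) ` insert v ?N \<subseteq> {f\<in>edges G. u \<in> f}"
    using assms e by (auto simp: common_nbrs_def)
  ultimately have "card (insert v ?N) \<le> card {f\<in>edges G. u \<in> f}"
    by (rule card_inj_on_le) (simp add: finite_edges)
  then show ?thesis
    using \<open>v \<notin> ?N\<close> finite_common_nbrs[OF assms] degree[OF \<open>u \<in> {1..n}\<close>] by simp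
qed

lemma card_permutations_apex_below:
  assumes "e \<in> edges G"
  shows "real (card (common_nbrs (edges G) e)) * card {\<sigma>. \<sigma> permutes {1..n}} / (d + 1)
    \<le> card {\<sigma>. \<sigma> permutes {1..n} \<and> apex_below \<sigma> (edges G) e}"
proof -
  let ?N = "common_nbrs (edges G) e" and ?P = "{\<sigma>. \<sigma> permutes {1..n}}"
  let ?B = "{\<sigma>. \<sigma> permutes {1..n} \<and> apex_below \<sigma> (edges G) e}"
  obtain x where "x \<in> e"
    using card_edge[OF assms] by (auto simp: card_2_iff)
  have "e \<subseteq> {1..n}"
    using assms edges_subset by blast
  then have "?N \<union> e \<subseteq> {1..n}"
    using common_nbrs_subset[OF \<open>x \<in> e\<close>] by (rule Un_least[rotated])
  moreover have "?N \<inter> e = {}"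
    using common_nbr_notin by blast
  ultimately have "card ?N * card ?P \<le> card ?B * (card ?N + card e)"
    unfolding apex_below_def by (rule card_permutations_some_below[OF finite_atLeastAtMost])
  then have "card ?N * card ?P \<le> card ?B * (card ?N + 2)"
    using card_edge[OF assms] by simp
  then have "real (card ?N * card ?P) \<le> real (card ?B * (card ?N + 2))"
    by (simp only: of_nat_le_iff)
  then have "real (card ?N) * card ?P \<le> real (card ?B) * (card ?N + 2)"
    by (simp only: of_nat_mult of_nat_add of_nat_numeral)
  also have "\<dots> \<le> real (card ?B) * (d + 1)"
    using card_common_nbrs_less[OF assms] by (intro mult_left_mono) simp_all
  finally show ?thesis
    by (subst pos_divide_le_eq) simp_all
qed

lemma sum_card_permutations_apex_below:
  "real (3 * card (triangles n G)) * card {\<sigma>. \<sigma> permutes {1..n}} / (d + 1)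
     \<le> (\<Sum>e\<in>edges G. real (card {\<sigma>. \<sigma> permutes {1..n} \<and> apex_below \<sigma> (edges G) e}))"
proof -
  have "real (3 * card (triangles n G)) * card {\<sigma>. \<sigma> permutes {1..n}} / (d + 1)
      = (\<Sum>e\<in>edges G. real (card (common_nbrs (edges G) e)) * card {\<sigma>. \<sigma> permutes {1..n}} / (d + 1))"
    by (simp flip: sum_divide_distrib sum_distrib_right sum_card_common_nbrs)
  also have "\<dots> \<le> (\<Sum>e\<in>edges G. real (card {\<sigma>. \<sigma> permutes {1..n} \<and> apex_below \<sigma> (edges G) e}))"
    by (intro sum_mono card_permutations_apex_below)
  finally show ?thesis .
qed

end

lemma Gstar_regular_graph:
  assumes "G \<in> Gstar d c n"
  shows "regular_graph n G d"
proof
  show "edges G \<subseteq> {e. e \<subseteq> {1..n} \<and> card e = 2}"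
    using assms by (auto simp: Gstar_def)
  show "i \<in> {1..n} \<Longrightarrow> card {e\<in>edges G. i \<in> e} = d" for i
    using assms by (simp add: Gstar_def)
qed

lemma Gstar_labelled_graph:
  assumes "G \<in> Gstar d c n"
  shows "labelled_graph G"
proof -
  interpret regular_graph n G d
    using Gstar_regular_graph[OF assms] .
  show ?thesis
  proof
    show "finite (edges G)" by (rule finite_edges)
    show "e \<in> edges G \<Longrightarrow> card e = 2" for e by (rule card_edge)
    fix i
    show "inj_on (elab G i) {e\<in>edges G. i \<in> e}"
    proof (cases "i \<in> {1..n}")
      case True
      then show ?thesis
        using assms by (auto simp: Gstar_def bij_betw_def)
    next
      case False
      then have "{e\<in>edges G. i \<in> e} = {}"
        using edges_subset by blast
      then show ?thesis by (metis inj_on_empty)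
    qed
  qed
qed

lemma T_max_eq: "T_max n d = real d * (real d - 1) * real n / 6"
proof -
  have "real (d choose 2) = real d * (real d - 1) / 2"
    by (simp add: binomial_gbinomial gbinomial_pochhammer' numeral_2_eq_2 pochhammer_Suc_prod_rev)
  then show ?thesis by (simp add: T_max_def)
qed

theorem lemma3:
  fixes n d :: nat and c :: real and G :: lgraph
  assumes "0 < c" "c < 1" "even (d * n)"
    and "G \<in> Gstar d c n"
  shows "measure_pmf.expectation (pmf_of_set {\<sigma>. \<sigma> permutes {1..n}})
           (\<lambda>\<sigma>. real (phi_norm n d (relabel \<sigma> G)))
         \<ge> c * (real d * real n / 2) * ((real d - 1) / (real d + 1))"
proof -
  interpret regular_graph n G d
    using Gstar_regular_graph[OF assms(4)] .
  interpret labelled_graph G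
    using Gstar_labelled_graph[OF assms(4)] .
  let ?P = "{\<sigma>. \<sigma> permutes {1..n}}" and ?E = "edges G"
  have "finite ?P" "?P \<noteq> {}"
    using finite_permutations permutes_id by blast+
  have "n * d div 2 = card ?E"
    using card_edges by simp
  then have phi_norm: "phi_norm n d (relabel \<sigma> G) = card {e\<in>?E. apex_below \<sigma> ?E e}" if "\<sigma> \<in> ?P" for \<sigma>
    using sum_phi_relabel[OF permutes_inj] that by (simp add: phi_norm_def)
  have "c * (real d * real n / 2) * ((real d - 1) / (real d + 1)) = 3 * (c * T_max n d) / (d + 1)"
    by (simp add: T_max_eq field_simps)
  also have "\<dots> \<le> real (3 * card (triangles n G)) / (d + 1)"
    using assms(4) by (intro divide_right_mono) (simp_all add: Gstar_def)
  also have "\<dots> \<le> (\<Sum>e\<in>?E. real (card {\<sigma>\<in>?P. apex_below \<sigma> ?E e})) / card ?P"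
    using sum_card_permutations_apex_below \<open>finite ?P\<close> \<open>?P \<noteq> {}\<close>
    by (subst pos_le_divide_eq) (simp_all add: card_gt_0_iff)
  also have "\<dots> = (\<Sum>\<sigma>\<in>?P. real (card {e\<in>?E. apex_below \<sigma> ?E e})) / card ?P"
    using sum_card_filter_swap[OF \<open>finite ?P\<close> finite_edges] by (simp flip: of_nat_sum)
  also have "\<dots> = measure_pmf.expectation (pmf_of_set ?P) (\<lambda>\<sigma>. real (phi_norm n d (relabel \<sigma> G)))"
    using \<open>finite ?P\<close> \<open>?P \<noteq> {}\<close> by (simp add: integral_pmf_of_set phi_norm)
  finally show ?thesis .
qed

end
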